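(* Let $M$ be the metric space \[M:=\Big\{\Big(a,\tfrac{1}{2^{n}}\Big)\colon a\in[0,1],\ n\in\mathbb{N}\Big\}\cup \Big\{(a,b)\colon a\in\{0,1\},\ b\in\Big[0,\tfrac{1}{2}\Big]\Big\}\subseteq\mathbb{R}^2\] with the metric \[d\big((a,b),(c,e)\big):=\begin{cases} |a-c|, & \text{if }b=e,\\ \min\{a+c,\,2-a-c\}+|b-e|, &\text{if } b\neq e, \end{cases}\] and base point $(0,0)$. Then the Lipschitz-free space $\mathcal{F}(M)$ is not weakly almost square.
   Context: For a pointed metric space $(M,d,0)$, $\mathrm{Lip}_0(M)$ is the Banach space of Lipschitz functions $f\colon M\to\mathbb{R}$ with $f(0)=0$, normed by the best Lipschitz constant. Let $\delta\colon M\to\mathrm{Lip}_0(M)^*$, $\delta_x(f)=f(x)$. The Lipschitz-free space $\mathcal{F}(M)$ is the norm-closed linear span of $\{\delta_x\colon x\in M\}$ in $\mathrm{Lip}_0(M)^*$; its dual is $\mathrm{Lip}_0(M)$. A Banach space $X$ is weakly almost square (WASQ) if for every $x\in S_X$ there is a sequence $(y_i)\subseteq B_X$ with $\|x\pm y_i\|\to 1$, $\|y_i\|\to1$, and $y_i\to0$ weakly. Here $\mathbb{N}=\{1,2,\dots\}$. *)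

theory Defs
  imports "HOL-Analysis.Analysis"
begin

text \<open>Pointed metric space given by a carrier set M, a distance d and a base point z.
  Lipschitz functions are represented extensionally (value 0 outside M).\<close>

definition lip0 :: "'a set \<Rightarrow> ('a \<Rightarrow> 'a \<Rightarrow> real) \<Rightarrow> 'a \<Rightarrow> ('a \<Rightarrow> real) set" where
  "lip0 M d z = {f. f z = 0 \<and> (\<forall>x. x \<notin> M \<longrightarrow> f x = 0) \<and>
      (\<exists>L. \<forall>p\<in>M. \<forall>q\<in>M. \<bar>f p - f q\<bar> \<le> L * d p q)}"

definition lipnorm :: "'a set \<Rightarrow> ('a \<Rightarrow> 'a \<Rightarrow> real) \<Rightarrow> ('a \<Rightarrow> real) \<Rightarrow> real" where
  "lipnorm M d f = Sup {\<bar>f p - f q\<bar> / d p q | p q. p \<in> M \<and> q \<in> M \<and> p \<noteq> q}"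

definition dnorm :: "'a set \<Rightarrow> ('a \<Rightarrow> 'a \<Rightarrow> real) \<Rightarrow> 'a \<Rightarrow> (('a \<Rightarrow> real) \<Rightarrow> real) \<Rightarrow> real" where
  "dnorm M d z \<mu> = Sup {\<bar>\<mu> f\<bar> | f. f \<in> lip0 M d z \<and> lipnorm M d f \<le> 1}"

text \<open>Lipschitz-free space: norm-closure in Lip_0(M)^* of the span of the evaluation
  functionals delta_x. Elements are functionals, extensionally 0 outside Lip_0(M).\<close>
definition free_space :: "'a set \<Rightarrow> ('a \<Rightarrow> 'a \<Rightarrow> real) \<Rightarrow> 'a \<Rightarrow> (('a \<Rightarrow> real) \<Rightarrow> real) set" where
  "free_space M d z = {\<mu>. (\<forall>f. f \<notin> lip0 M d z \<longrightarrow> \<mu> f = 0) \<and>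
     (\<forall>e>0. \<exists>S c. finite S \<and> S \<subseteq> M \<and>
        (\<forall>f\<in>lip0 M d z. \<bar>\<mu> f - (\<Sum>x\<in>S. c x * f x)\<bar> \<le> e * lipnorm M d f))}"

definition weakly_null :: "'a set \<Rightarrow> ('a \<Rightarrow> 'a \<Rightarrow> real) \<Rightarrow> 'a \<Rightarrow> (nat \<Rightarrow> (('a \<Rightarrow> real) \<Rightarrow> real)) \<Rightarrow> bool" where
  "weakly_null M d z y \<longleftrightarrow>
     (\<forall>\<phi> :: (('a \<Rightarrow> real) \<Rightarrow> real) \<Rightarrow> real.
        (\<forall>\<mu>\<in>free_space M d z. \<forall>\<nu>\<in>free_space M d z. \<forall>a b.
            \<phi> (\<lambda>f. a * \<mu> f + b * \<nu> f) = a * \<phi> \<mu> + b * \<phi> \<nu>) \<and>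
        (\<exists>C. \<forall>\<mu>\<in>free_space M d z. \<bar>\<phi> \<mu>\<bar> \<le> C * dnorm M d z \<mu>)
        \<longrightarrow> (\<lambda>i. \<phi> (y i)) \<longlonglongrightarrow> 0)"

definition free_WASQ :: "'a set \<Rightarrow> ('a \<Rightarrow> 'a \<Rightarrow> real) \<Rightarrow> 'a \<Rightarrow> bool" where
  "free_WASQ M d z \<longleftrightarrow>
     (\<forall>x\<in>free_space M d z. dnorm M d z x = 1 \<longrightarrow>
        (\<exists>y :: nat \<Rightarrow> (('a \<Rightarrow> real) \<Rightarrow> real).
           (\<forall>i. y i \<in> free_space M d z \<and> dnorm M d z (y i) \<le> 1) \<and>
           (\<lambda>i. dnorm M d z (\<lambda>f. x f + y i f)) \<longlonglongrightarrow> 1 \<and>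
           (\<lambda>i. dnorm M d z (\<lambda>f. x f - y i f)) \<longlonglongrightarrow> 1 \<and>
           (\<lambda>i. dnorm M d z (y i)) \<longlonglongrightarrow> 1 \<and>
           weakly_null M d z y))"

text \<open>The concrete metric space of the theorem (N = {1,2,...}).\<close>
definition Mex :: "(real \<times> real) set" where
  "Mex = {(a, 1 / 2 ^ n) | a n. a \<in> {0..1} \<and> n \<ge> (1::nat)}
       \<union> {(a, b) | a b. a \<in> {0, 1} \<and> b \<in> {0..1/2}}"

definition dex :: "real \<times> real \<Rightarrow> real \<times> real \<Rightarrow> real" where
  "dex p q = (case p of (a, b) \<Rightarrow> case q of (c, e) \<Rightarrow>
      if b = e then \<bar>a - c\<bar> else min (a + c) (2 - a - c) + \<bar>b - e\<bar>)"

end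

theory Submission
  imports Defs
begin

text \<open>Write q = (1, 0). If F(M) were weakly almost square, there would be a weakly null sequence
  y i with norm tending to 1 and with the norms of delta q + y i and delta q - y i tending to 1.
  Then y i is almost zero on every 1-Lipschitz function f with f q = 1. The function
  b/2 + a (1 - b) is such a function, and it has slope at most 1 - 2^-N along the rungs
  [0, 1] \<times> {2^-n} of M with n \<le> N, so it can be perturbed there by 2^-N times an arbitrary 1-Lipschitz function g, while on
  the deeper rungs only the linear interpolation of g between the sides is affordable. Hence y i,
  which almost attains its norm at some g, must put mass at least 1/4 on a 1-Lipschitz function
  supported in the interior of the rungs of index above N, for every N and all large i. Functions
  supported on disjoint blocks of rungs add up without increasing the Lipschitz constant, so a
  sliding hump produces one 1-Lipschitz function on which y i does not tend to 0, contradicting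
  weak nullity.\<close>

section \<open>Lipschitz-free spaces over a pointed premetric space\<close>

text \<open>The second point of M makes
  lipnorm a supremum over a nonempty set.\<close>

locale pointed_premetric =
  fixes M :: "'a set" and d :: "'a \<Rightarrow> 'a \<Rightarrow> real" and z :: 'a
  assumes base_in: "z \<in> M"
    and dist_pos: "p \<in> M \<Longrightarrow> q \<in> M \<Longrightarrow> p \<noteq> q \<Longrightarrow> 0 < d p q"
    and dist_self: "p \<in> M \<Longrightarrow> d p p = 0"
    and nontrivial: "\<exists>p\<in>M. p \<noteq> z"
begin

abbreviation "Lip0 \<equiv> lip0 M d z"
abbreviation "lnorm \<equiv> lipnorm M d"
abbreviation "Free \<equiv> free_space M d z"
abbreviation "fnorm \<equiv> dnorm M d z"

lemma lipnorm_le: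
  assumes "\<forall>p\<in>M. \<forall>q\<in>M. \<bar>f p - f q\<bar> \<le> L * d p q"
  shows "lnorm f \<le> L"
  unfolding lipnorm_def
proof (rule cSup_least)
  obtain p where "p \<in> M" "p \<noteq> z" using nontrivial by blast
  then show "{\<bar>f p - f q\<bar> / d p q | p q. p \<in> M \<and> q \<in> M \<and> p \<noteq> q} \<noteq> {}"
    using base_in by blast
next
  fix x assume "x \<in> {\<bar>f p - f q\<bar> / d p q | p q. p \<in> M \<and> q \<in> M \<and> p \<noteq> q}"
  then obtain p q where "p \<in> M" "q \<in> M" "p \<noteq> q" "x = \<bar>f p - f q\<bar> / d p q" by blast
  then show "x \<le> L" using assms dist_pos[of p q] by (simp add: divide_le_eq)
qed

lemma lip0_lipschitz:
  assumes f: "f \<in> Lip0" and p: "p \<in> M" and q: "q \<in> M"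
  shows "\<bar>f p - f q\<bar> \<le> lnorm f * d p q"
proof (cases "p = q")
  case False
  obtain L where L: "\<forall>p\<in>M. \<forall>q\<in>M. \<bar>f p - f q\<bar> \<le> L * d p q"
    using f unfolding lip0_def by blast
  have "bdd_above {\<bar>f p - f q\<bar> / d p q | p q. p \<in> M \<and> q \<in> M \<and> p \<noteq> q}"
    by (rule bdd_aboveI[of _ L]) (use L dist_pos in \<open>auto simp: divide_le_eq\<close>)
  then have "\<bar>f p - f q\<bar> / d p q \<le> lnorm f"
    unfolding lipnorm_def using p q False by (auto intro!: cSup_upper)
  then show ?thesis using dist_pos[OF p q False] by (simp add: divide_le_eq)
qed (use q dist_self in simp)

lemma lip0_base: "f \<in> Lip0 \<Longrightarrow> f z = 0"
  and lip0_outside: "f \<in> Lip0 \<Longrightarrow> p \<notin> M \<Longrightarrow> f p = 0"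
  unfolding lip0_def by auto

lemma lipnorm_nonneg: "f \<in> Lip0 \<Longrightarrow> 0 \<le> lnorm f"
proof -
  assume f: "f \<in> Lip0"
  obtain p where p: "p \<in> M" "p \<noteq> z" using nontrivial by blast
  have "0 \<le> \<bar>f p - f z\<bar>" by simp
  also have "\<dots> \<le> lnorm f * d p z" using lip0_lipschitz[OF f p(1) base_in] .
  finally show ?thesis using dist_pos[OF p(1) base_in p(2)] by (simp add: zero_le_mult_iff)
qed

lemma unit_ball_lipschitz:
  assumes "f \<in> Lip0" "lnorm f \<le> 1" "p \<in> M" "q \<in> M"
  shows "\<bar>f p - f q\<bar> \<le> d p q"
proof -
  have "0 \<le> d p q" using assms(3,4) dist_pos[of p q] dist_self[of p] by (cases "p = q") auto
  then have "lnorm f * d p q \<le> d p q" using assms(2) by (simp add: mult_left_le_one_le lipnorm_nonneg assms(1))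
  then show ?thesis using lip0_lipschitz[OF assms(1,3,4)] by linarith
qed

lemma lip0_lincomb:
  assumes f: "f \<in> Lip0" and g: "g \<in> Lip0"
  shows "(\<lambda>p. a * f p + b * g p) \<in> Lip0"
proof -
  obtain K L where K: "\<forall>p\<in>M. \<forall>q\<in>M. \<bar>f p - f q\<bar> \<le> K * d p q"
    and L: "\<forall>p\<in>M. \<forall>q\<in>M. \<bar>g p - g q\<bar> \<le> L * d p q"
    using f g unfolding lip0_def by blast
  have "\<bar>(a * f p + b * g p) - (a * f q + b * g q)\<bar> \<le> (\<bar>a\<bar> * K + \<bar>b\<bar> * L) * d p q"
    if "p \<in> M" "q \<in> M" for p q
  proof -
    have "\<bar>(a * f p + b * g p) - (a * f q + b * g q)\<bar> \<le> \<bar>a\<bar> * \<bar>f p - f q\<bar> + \<bar>b\<bar> * \<bar>g p - g q\<bar>"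
    proof -
      have "(a * f p + b * g p) - (a * f q + b * g q) = a * (f p - f q) + b * (g p - g q)"
        by (simp add: algebra_simps)
      then show ?thesis unfolding abs_mult[symmetric] by (metis abs_triangle_ineq)
    qed
    also have "\<dots> \<le> \<bar>a\<bar> * (K * d p q) + \<bar>b\<bar> * (L * d p q)"
      using K L that by (intro add_mono mult_left_mono) auto
    finally show ?thesis by (simp add: algebra_simps)
  qed
  then show ?thesis using f g unfolding lip0_def by auto
qed

lemma free_space_approx:
  "\<mu> \<in> Free \<Longrightarrow> 0 < e \<Longrightarrow>
    \<exists>S c. finite S \<and> S \<subseteq> M \<and> (\<forall>f\<in>Lip0. \<bar>\<mu> f - (\<Sum>x\<in>S. c x * f x)\<bar> \<le> e * lnorm f)"
  unfolding free_space_def by blast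

lemma free_space_linear:
  assumes \<mu>: "\<mu> \<in> Free" and f: "f \<in> Lip0" and g: "g \<in> Lip0"
  shows "\<mu> (\<lambda>p. a * f p + b * g p) = a * \<mu> f + b * \<mu> g"
proof -
  define h where "h = (\<lambda>p. a * f p + b * g p)"
  have h: "h \<in> Lip0" unfolding h_def using lip0_lincomb[OF f g] .
  define K where "K = lnorm h + \<bar>a\<bar> * lnorm f + \<bar>b\<bar> * lnorm g"
  have K: "0 \<le> K"
    unfolding K_def using lipnorm_nonneg[OF h] lipnorm_nonneg[OF f] lipnorm_nonneg[OF g] by simp
  have "\<bar>\<mu> h - (a * \<mu> f + b * \<mu> g)\<bar> \<le> 0 + e" if e: "0 < e" for e
  proof -
    define e' where "e' = e / (K + 1)"
    have "0 < e'" unfolding e'_def using e K by simp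
    then obtain S c where S: "\<And>f. f \<in> Lip0 \<Longrightarrow> \<bar>\<mu> f - (\<Sum>x\<in>S. c x * f x)\<bar> \<le> e' * lnorm f"
      using free_space_approx[OF \<mu>] by blast
    define \<sigma> where "\<sigma> u = (\<Sum>x\<in>S. c x * u x)" for u :: "'a \<Rightarrow> real"
    have "\<sigma> h = a * \<sigma> f + b * \<sigma> g"
      unfolding h_def \<sigma>_def by (simp add: sum_distrib_left sum.distrib algebra_simps)
    then have eq: "\<mu> h - (a * \<mu> f + b * \<mu> g) = (\<mu> h - \<sigma> h) - a * (\<mu> f - \<sigma> f) - b * (\<mu> g - \<sigma> g)"
      by (simp add: algebra_simps)
    have "\<bar>\<mu> h - (a * \<mu> f + b * \<mu> g)\<bar>
        \<le> \<bar>\<mu> h - \<sigma> h\<bar> + \<bar>a\<bar> * \<bar>\<mu> f - \<sigma> f\<bar> + \<bar>b\<bar> * \<bar>\<mu> g - \<sigma> g\<bar>"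
      using abs_triangle_ineq4[of "\<mu> h - \<sigma> h - a * (\<mu> f - \<sigma> f)" "b * (\<mu> g - \<sigma> g)"]
        abs_triangle_ineq4[of "\<mu> h - \<sigma> h" "a * (\<mu> f - \<sigma> f)"]
      unfolding eq abs_mult by linarith
    also have "\<dots> \<le> e' * lnorm h + \<bar>a\<bar> * (e' * lnorm f) + \<bar>b\<bar> * (e' * lnorm g)"
      using S[OF h] S[OF f] S[OF g] unfolding \<sigma>_def by (intro add_mono mult_left_mono) auto
    also have "\<dots> = e' * K" unfolding K_def by (simp add: algebra_simps)
    also have "\<dots> \<le> e" unfolding e'_def using e K by (simp add: field_simps)
    finally show ?thesis by simp
  qed
  then have "\<bar>\<mu> h - (a * \<mu> f + b * \<mu> g)\<bar> \<le> 0" by (rule field_le_epsilon)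
  then show ?thesis unfolding h_def by simp
qed

lemma zero_in_unit_ball: "(\<lambda>_. 0) \<in> Lip0" "lnorm (\<lambda>_. 0) \<le> 1"
proof -
  have "\<forall>p\<in>M. \<forall>q\<in>M. \<bar>(0::real) - 0\<bar> \<le> 0 * d p q" by simp
  then show "(\<lambda>_. 0) \<in> Lip0" "lnorm (\<lambda>_. 0) \<le> 1"
    using lipnorm_le[of "\<lambda>_. 0" 0] unfolding lip0_def by (auto intro!: exI[of _ 0])
qed

lemma unit_ball_uminus:
  assumes "f \<in> Lip0" "lnorm f \<le> 1"
  shows "(\<lambda>p. - f p) \<in> Lip0" "lnorm (\<lambda>p. - f p) \<le> 1"
proof -
  show "(\<lambda>p. - f p) \<in> Lip0" using lip0_lincomb[OF assms(1) assms(1), of "-1" 0] by simp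
  have "\<forall>p\<in>M. \<forall>q\<in>M. \<bar>- f p - - f q\<bar> \<le> 1 * d p q"
    using unit_ball_lipschitz[OF assms] by (simp add: abs_minus_commute)
  then show "lnorm (\<lambda>p. - f p) \<le> 1" by (rule lipnorm_le)
qed

definition dual_bounded :: "(('a \<Rightarrow> real) \<Rightarrow> real) \<Rightarrow> bool" where
  "dual_bounded \<mu> \<longleftrightarrow> (\<exists>B. \<forall>f\<in>Lip0. lnorm f \<le> 1 \<longrightarrow> \<bar>\<mu> f\<bar> \<le> B)"

lemma dual_bounded_add_diff:
  assumes "dual_bounded \<mu>" "dual_bounded \<nu>"
  shows dual_bounded_add: "dual_bounded (\<lambda>f. \<mu> f + \<nu> f)"
    and dual_bounded_diff: "dual_bounded (\<lambda>f. \<mu> f - \<nu> f)"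
proof -
  obtain A B where "\<forall>f\<in>Lip0. lnorm f \<le> 1 \<longrightarrow> \<bar>\<mu> f\<bar> \<le> A" "\<forall>f\<in>Lip0. lnorm f \<le> 1 \<longrightarrow> \<bar>\<nu> f\<bar> \<le> B"
    using assms unfolding dual_bounded_def by blast
  then have "\<forall>f\<in>Lip0. lnorm f \<le> 1 \<longrightarrow> \<bar>\<mu> f + \<nu> f\<bar> \<le> A + B \<and> \<bar>\<mu> f - \<nu> f\<bar> \<le> A + B"
    by (fastforce simp: abs_le_iff)
  then show "dual_bounded (\<lambda>f. \<mu> f + \<nu> f)" "dual_bounded (\<lambda>f. \<mu> f - \<nu> f)"
    unfolding dual_bounded_def by blast+
qed

lemma free_space_dual_bounded:
  assumes "\<mu> \<in> Free"
  shows "dual_bounded \<mu>"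
proof -
  obtain S c where S: "finite S" "S \<subseteq> M" "\<forall>f\<in>Lip0. \<bar>\<mu> f - (\<Sum>x\<in>S. c x * f x)\<bar> \<le> 1 * lnorm f"
    using free_space_approx[OF assms, of 1] by auto
  have "\<bar>\<mu> f\<bar> \<le> 1 + (\<Sum>x\<in>S. \<bar>c x\<bar> * d x z)" if f: "f \<in> Lip0" "lnorm f \<le> 1" for f
  proof -
    have "\<bar>c x * f x\<bar> \<le> \<bar>c x\<bar> * d x z" if "x \<in> S" for x
      using unit_ball_lipschitz[OF f, of x z] S(2) that base_in lip0_base[OF f(1)]
      by (auto simp: abs_mult subset_iff intro: mult_left_mono)
    then have "\<bar>\<Sum>x\<in>S. c x * f x\<bar> \<le> (\<Sum>x\<in>S. \<bar>c x\<bar> * d x z)"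
      using sum_abs[of "\<lambda>x. c x * f x" S] sum_mono[of S "\<lambda>x. \<bar>c x * f x\<bar>"] by (meson order_trans)
    moreover have "\<bar>\<mu> f - (\<Sum>x\<in>S. c x * f x)\<bar> \<le> 1" using S(3) f by force
    ultimately show ?thesis by linarith
  qed
  then show ?thesis unfolding dual_bounded_def by blast
qed

lemma dnorm_ge:
  assumes "dual_bounded \<mu>" "f \<in> Lip0" "lnorm f \<le> 1"
  shows "\<bar>\<mu> f\<bar> \<le> fnorm \<mu>"
  unfolding dnorm_def
  by (rule cSup_upper) (use assms in \<open>auto simp: dual_bounded_def bdd_above_def\<close>)

lemma dnorm_le:
  assumes "\<And>f. f \<in> Lip0 \<Longrightarrow> lnorm f \<le> 1 \<Longrightarrow> \<bar>\<mu> f\<bar> \<le> B"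
  shows "fnorm \<mu> \<le> B"
  unfolding dnorm_def by (rule cSup_least) (use assms zero_in_unit_ball in auto)

lemma free_space_norming:
  assumes \<mu>: "\<mu> \<in> Free" and c: "c < fnorm \<mu>"
  obtains f where "f \<in> Lip0" "lnorm f \<le> 1" "c < \<mu> f"
proof -
  have "bdd_above {\<bar>\<mu> f\<bar> | f. f \<in> Lip0 \<and> lnorm f \<le> 1}"
    using free_space_dual_bounded[OF \<mu>] unfolding dual_bounded_def bdd_above_def by blast
  then obtain f where f: "f \<in> Lip0" "lnorm f \<le> 1" "c < \<bar>\<mu> f\<bar>"
    using c zero_in_unit_ball unfolding dnorm_def by (subst (asm) less_cSup_iff) auto
  have "\<mu> (\<lambda>p. - f p) = - \<mu> f" using free_space_linear[OF \<mu> f(1) f(1), of "-1" 0] by simp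
  then show ?thesis using that[OF f(1,2)] that[OF unit_ball_uminus[OF f(1,2)]] f(3) by linarith
qed

definition delta :: "'a \<Rightarrow> ('a \<Rightarrow> real) \<Rightarrow> real" where
  "delta p f = (if f \<in> Lip0 then f p else 0)"

lemma delta_in_free_space: "p \<in> M \<Longrightarrow> delta p \<in> Free"
  unfolding free_space_def delta_def
  by (auto intro!: exI[of _ "{p}"] exI[of _ "\<lambda>_. 1"] simp: lipnorm_nonneg)

lemma dnorm_delta_le: "p \<in> M \<Longrightarrow> fnorm (delta p) \<le> d p z"
  by (rule dnorm_le) (use unit_ball_lipschitz base_in lip0_base in \<open>fastforce simp: delta_def\<close>)

lemma weakly_null_unit_ball:
  assumes y: "weakly_null M d z y" and f: "f \<in> Lip0" "lnorm f \<le> 1"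
  shows "(\<lambda>i. y i f) \<longlonglongrightarrow> 0"
proof -
  have "\<forall>\<mu>\<in>Free. \<bar>\<mu> f\<bar> \<le> 1 * fnorm \<mu>"
    using dnorm_ge[OF free_space_dual_bounded f] by simp
  then have "(\<forall>\<mu>\<in>Free. \<forall>\<nu>\<in>Free. \<forall>a b. a * \<mu> f + b * \<nu> f = a * \<mu> f + b * \<nu> f) \<and>
      (\<exists>C. \<forall>\<mu>\<in>Free. \<bar>\<mu> f\<bar> \<le> C * fnorm \<mu>)"
    by blast
  then show ?thesis using y[unfolded weakly_null_def, rule_format, of "\<lambda>\<mu>. \<mu> f"] by simp
qed

lemma small_on_norming_functions:
  assumes \<nu>: "dual_bounded \<nu>" and \<mu>: "dual_bounded \<mu>"
    and plus: "fnorm (\<lambda>f. \<nu> f + \<mu> f) \<le> 1 + \<eta>" and minus: "fnorm (\<lambda>f. \<nu> f - \<mu> f) \<le> 1 + \<eta>"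
    and f: "f \<in> Lip0" "lnorm f \<le> 1" and norming: "\<nu> f = 1"
  shows "\<bar>\<mu> f\<bar> \<le> \<eta>"
  using dnorm_ge[OF dual_bounded_add[OF \<nu> \<mu>] f] dnorm_ge[OF dual_bounded_diff[OF \<nu> \<mu>] f]
    plus minus norming by (simp add: abs_le_iff)

end

section \<open>The space M\<close>

lemma mem_Mex_iff:
  "(a, b) \<in> Mex \<longleftrightarrow> (\<exists>n\<ge>1. b = 1 / 2 ^ n \<and> 0 \<le> a \<and> a \<le> 1) \<or> (a \<in> {0, 1} \<and> 0 \<le> b \<and> b \<le> 1 / 2)"
  by (auto simp: Mex_def)

lemma half_power_le: "1 \<le> n \<Longrightarrow> 1 / 2 ^ n \<le> (1 / 2 :: real)"
  using power_increasing[of 1 n "2::real"] by (simp add: field_simps)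

lemma Mex_bounds:
  assumes "(a, b) \<in> Mex"
  shows "0 \<le> a" "a \<le> 1" "0 \<le> b" "b \<le> 1 / 2"
  using assms half_power_le unfolding mem_Mex_iff by auto

lemma side_in_Mex: "s \<in> {0, 1} \<Longrightarrow> 0 \<le> b \<Longrightarrow> b \<le> 1 / 2 \<Longrightarrow> (s, b) \<in> Mex"
  unfolding mem_Mex_iff by auto

lemma dex_same_level: "dex (a, b) (c, b) = \<bar>a - c\<bar>"
  and dex_other_level: "b \<noteq> e \<Longrightarrow> dex (a, b) (c, e) = min (a + c) (2 - a - c) + \<bar>b - e\<bar>"
  by (simp_all add: dex_def)

lemma dex_side: "s \<in> {0, 1} \<Longrightarrow> dex (s, b) (s, e) = \<bar>b - e\<bar>"
  by (auto simp: dex_def)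

interpretation ex: pointed_premetric Mex dex "(0, 0)"
proof
  show "(0, 0) \<in> Mex" by (rule side_in_Mex) auto
  show "\<exists>p\<in>Mex. p \<noteq> (0, 0)" using side_in_Mex[of 1 0] by auto
  fix p q assume p: "p \<in> Mex" and q: "q \<in> Mex"
  obtain a b c e where [simp]: "p = (a, b)" "q = (c, e)" by fastforce
  show "p \<noteq> q \<Longrightarrow> 0 < dex p q" "dex p p = 0"
    using Mex_bounds[of a b] Mex_bounds[of c e] p q by (auto simp: dex_def)
qed

text \<open>A function on Mex is L-Lipschitz as soon as it is L-Lipschitz along every horizontal level and
  along the two vertical sides: a path between different levels can run along a level to a side,
  along that side, and back along the other level.\<close>

lemma Mex_lipschitzI:
  assumes horizontal: "\<And>a b c. (a, b) \<in> Mex \<Longrightarrow> (c, b) \<in> Mex \<Longrightarrow> \<bar>f (a, b) - f (c, b)\<bar> \<le> L * \<bar>a - c\<bar>"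
    and vertical: "\<And>s b e. s \<in> {0, 1} \<Longrightarrow> 0 \<le> b \<Longrightarrow> b \<le> 1 / 2 \<Longrightarrow> 0 \<le> e \<Longrightarrow> e \<le> 1 / 2 \<Longrightarrow>
        \<bar>f (s, b) - f (s, e)\<bar> \<le> L * \<bar>b - e\<bar>"
    and L: "0 \<le> L" and p: "p \<in> Mex" and q: "q \<in> Mex"
  shows "\<bar>f p - f q\<bar> \<le> L * dex p q"
proof -
  obtain a b c e where pq: "p = (a, b)" "q = (c, e)" by fastforce
  note bounds = Mex_bounds[OF p[unfolded pq]] Mex_bounds[OF q[unfolded pq]]
  show ?thesis
  proof (cases "b = e")
    case True
    then show ?thesis using horizontal p q unfolding pq by (simp add: dex_same_level)
  next
    case False
    have sides: "(s, b) \<in> Mex" "(s, e) \<in> Mex" if "s \<in> {0, 1}" for s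
      using that bounds by (auto intro: side_in_Mex)
    have path: "\<bar>f (a, b) - f (c, e)\<bar> \<le> L * (\<bar>a - s\<bar> + \<bar>b - e\<bar> + \<bar>s - c\<bar>)" if s: "s \<in> {0, 1}" for s
      using horizontal[OF p[unfolded pq] sides(1)[OF s]] horizontal[OF sides(2)[OF s] q[unfolded pq]]
        vertical[OF s bounds(3,4,7,8)]
      by (simp add: algebra_simps) linarith
    have "\<bar>f (a, b) - f (c, e)\<bar> \<le> L * (a + c + \<bar>b - e\<bar>)"
      using path[of 0] bounds by (simp add: algebra_simps)
    moreover have "\<bar>f (a, b) - f (c, e)\<bar> \<le> L * ((2 - a - c) + \<bar>b - e\<bar>)"
      using path[of 1] bounds by (simp add: algebra_simps)
    ultimately have "\<bar>f (a, b) - f (c, e)\<bar> \<le> min (L * (a + c + \<bar>b - e\<bar>)) (L * ((2 - a - c) + \<bar>b - e\<bar>))"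
      by simp
    also have "\<dots> = L * dex (a, b) (c, e)"
      using False L by (simp add: dex_other_level min_add_distrib_left min_mult_distrib_left)
    finally show ?thesis unfolding pq .
  qed
qed

lemma Mex_unit_ballI:
  assumes base: "f (0, 0) = 0" and outside: "\<And>p. p \<notin> Mex \<Longrightarrow> f p = 0"
    and horizontal: "\<And>a b c. (a, b) \<in> Mex \<Longrightarrow> (c, b) \<in> Mex \<Longrightarrow> \<bar>f (a, b) - f (c, b)\<bar> \<le> \<bar>a - c\<bar>"
    and vertical: "\<And>s b e. s \<in> {0, 1} \<Longrightarrow> 0 \<le> b \<Longrightarrow> b \<le> 1 / 2 \<Longrightarrow> 0 \<le> e \<Longrightarrow> e \<le> 1 / 2 \<Longrightarrow>
        \<bar>f (s, b) - f (s, e)\<bar> \<le> \<bar>b - e\<bar>"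
  shows "f \<in> ex.Lip0 \<and> ex.lnorm f \<le> 1"
proof -
  have "\<forall>p\<in>Mex. \<forall>q\<in>Mex. \<bar>f p - f q\<bar> \<le> 1 * dex p q"
    using Mex_lipschitzI[of f 1] horizontal vertical by simp
  then show ?thesis using base outside ex.lipnorm_le unfolding lip0_def by blast
qed

definition norming_q :: "real \<times> real \<Rightarrow> real" where
  "norming_q p = (if p \<in> Mex then snd p / 2 + fst p * (1 - snd p) else 0)"

lemma norming_q_at: "(a, b) \<in> Mex \<Longrightarrow> norming_q (a, b) = b / 2 + a * (1 - b)"
  by (simp add: norming_q_def)

lemma norming_q_unit_ball: "norming_q \<in> ex.Lip0 \<and> ex.lnorm norming_q \<le> 1"
proof (rule Mex_unit_ballI)
  fix a b c assume ab: "(a, b) \<in> Mex" and cb: "(c, b) \<in> Mex"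
  have "norming_q (a, b) - norming_q (c, b) = (a - c) * (1 - b)"
    using ab cb by (simp add: norming_q_at algebra_simps)
  then have "\<bar>norming_q (a, b) - norming_q (c, b)\<bar> = \<bar>a - c\<bar> * (1 - b)"
    using Mex_bounds[OF ab] by (simp add: abs_mult)
  also have "\<dots> \<le> \<bar>a - c\<bar>" using Mex_bounds[OF ab] by (simp add: mult_left_le)
  finally show "\<bar>norming_q (a, b) - norming_q (c, b)\<bar> \<le> \<bar>a - c\<bar>" .
next
  fix s b e :: real assume "s \<in> {0, 1}" "0 \<le> b" "b \<le> 1 / 2" "0 \<le> e" "e \<le> 1 / 2"
  then show "\<bar>norming_q (s, b) - norming_q (s, e)\<bar> \<le> \<bar>b - e\<bar>"
    using side_in_Mex[of s] by (auto simp: norming_q_at abs_if)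
qed (auto simp: norming_q_def)

lemma norming_q_norming: "norming_q (1, 0) = 1"
  using side_in_Mex[of 1 0] by (simp add: norming_q_at)

lemma dnorm_delta_q: "ex.fnorm (ex.delta (1, 0)) = 1"
proof (rule antisym)
  show "ex.fnorm (ex.delta (1, 0)) \<le> 1"
    using ex.dnorm_delta_le[OF side_in_Mex[of 1 0]] by (simp add: dex_same_level)
  have "\<bar>ex.delta (1, 0) norming_q\<bar> \<le> ex.fnorm (ex.delta (1, 0))"
    using ex.dnorm_ge[OF ex.free_space_dual_bounded[OF ex.delta_in_free_space]] norming_q_unit_ball
      side_in_Mex[of 1 0] by simp
  then show "1 \<le> ex.fnorm (ex.delta (1, 0))"
    using norming_q_unit_ball norming_q_norming by (simp add: ex.delta_def)
qed

section \<open>Functions living on the deep rungs\<close>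

definition on_rung_beyond :: "nat \<Rightarrow> real \<times> real \<Rightarrow> bool" where
  "on_rung_beyond N p \<longleftrightarrow> (\<exists>n>N. snd p = 1 / 2 ^ n \<and> 0 < fst p \<and> fst p < 1)"

lemma on_rung_beyond_iff: "on_rung_beyond N (a, 1 / 2 ^ n) \<longleftrightarrow> N < n \<and> 0 < a \<and> a < 1"
  unfolding on_rung_beyond_def by auto

lemma on_rung_beyond_mono: "N \<le> N' \<Longrightarrow> on_rung_beyond N' p \<Longrightarrow> on_rung_beyond N p"
  unfolding on_rung_beyond_def by (meson le_less_trans)

lemma on_rung_beyond_in_Mex: "on_rung_beyond N p \<Longrightarrow> p \<in> Mex"
  unfolding on_rung_beyond_def by (cases p) (auto simp: mem_Mex_iff)

lemma eventually_not_on_rung_beyond: "eventually (\<lambda>N. \<not> on_rung_beyond N p) sequentially"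
proof (cases "0 < snd p")
  case True
  obtain N0 where N0: "(1 / 2) ^ N0 < snd p" using real_arch_pow_inv[OF True, of "1 / 2"] by auto
  have "\<not> on_rung_beyond N p" if "N0 \<le> N" for N
  proof
    assume "on_rung_beyond N p"
    then obtain n where "N < n" "snd p = 1 / 2 ^ n" unfolding on_rung_beyond_def by blast
    moreover have "(1 / 2 :: real) ^ n \<le> (1 / 2) ^ N0" using \<open>N < n\<close> that by (intro power_decreasing) auto
    ultimately show False using N0 by (simp add: power_one_over)
  qed
  then show ?thesis unfolding eventually_sequentially by blast
qed (auto simp: on_rung_beyond_def intro!: always_eventually)

definition rung_function :: "nat \<Rightarrow> (real \<times> real \<Rightarrow> real) \<Rightarrow> bool" where
  "rung_function N G \<longleftrightarrow> G \<in> ex.Lip0 \<and> ex.lnorm G \<le> 1 \<and> (\<forall>p. \<not> on_rung_beyond N p \<longrightarrow> G p = 0)"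

lemma rung_functionI:
  assumes vanish: "\<And>p. \<not> on_rung_beyond N p \<Longrightarrow> G p = 0"
    and rung: "\<And>n a c. 1 \<le> n \<Longrightarrow> 0 \<le> a \<Longrightarrow> a \<le> 1 \<Longrightarrow> 0 \<le> c \<Longrightarrow> c \<le> 1 \<Longrightarrow>
        \<bar>G (a, 1 / 2 ^ n) - G (c, 1 / 2 ^ n)\<bar> \<le> \<bar>a - c\<bar>"
  shows "rung_function N G"
proof -
  have side: "G (s, b) = 0" if "s \<in> {0, 1}" for s b
    using vanish[of "(s, b)"] that unfolding on_rung_beyond_def by auto
  have "G \<in> ex.Lip0 \<and> ex.lnorm G \<le> 1"
  proof (rule Mex_unit_ballI)
    fix a b c assume ab: "(a, b) \<in> Mex" and cb: "(c, b) \<in> Mex"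
    show "\<bar>G (a, b) - G (c, b)\<bar> \<le> \<bar>a - c\<bar>"
    proof (cases "\<exists>n\<ge>1. b = 1 / 2 ^ n")
      case True
      then show ?thesis using rung Mex_bounds[OF ab] Mex_bounds[OF cb] by auto
    next
      case False
      then show ?thesis using ab cb side unfolding mem_Mex_iff by auto
    qed
  next
    show "G (0, 0) = 0" using side by simp
  next
    fix p assume "p \<notin> Mex"
    then show "G p = 0" using vanish on_rung_beyond_in_Mex by blast
  next
    fix s b e :: real assume "s \<in> {0, 1}"
    then show "\<bar>G (s, b) - G (s, e)\<bar> \<le> \<bar>b - e\<bar>" using side by simp
  qed
  then show ?thesis unfolding rung_function_def using vanish by blast
qed

lemma rung_function_vanishes: "rung_function N G \<Longrightarrow> \<not> on_rung_beyond N p \<Longrightarrow> G p = 0"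
  and rung_function_unit_ball: "rung_function N G \<Longrightarrow> G \<in> ex.Lip0" "rung_function N G \<Longrightarrow> ex.lnorm G \<le> 1"
  unfolding rung_function_def by blast+

lemma rung_function_rung_lipschitz:
  assumes "rung_function N G" "1 \<le> n" "0 \<le> a" "a \<le> 1" "0 \<le> c" "c \<le> 1"
  shows "\<bar>G (a, 1 / 2 ^ n) - G (c, 1 / 2 ^ n)\<bar> \<le> \<bar>a - c\<bar>"
  using ex.unit_ball_lipschitz[OF rung_function_unit_ball[OF assms(1)], of "(a, 1 / 2 ^ n)" "(c, 1 / 2 ^ n)"]
    assms(2-) by (simp add: mem_Mex_iff dex_same_level)

lemma rung_function_mono: "N' \<le> N \<Longrightarrow> rung_function N G \<Longrightarrow> rung_function N' G"
  unfolding rung_function_def using on_rung_beyond_mono by blast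

lemma rung_function_zero: "rung_function N (\<lambda>_. 0)"
  by (rule rung_functionI) auto

lemma rung_function_on_level:
  assumes "rung_function N G" "0 \<le> a" "a \<le> 1"
  shows "(if on_rung_beyond N' (a, 1 / 2 ^ n) then G (a, 1 / 2 ^ n) else 0) = (if N' < n then G (a, 1 / 2 ^ n) else 0)"
    and "\<not> N < n \<Longrightarrow> G (a, 1 / 2 ^ n) = 0"
  using assms rung_function_vanishes[OF assms(1), of "(a, 1 / 2 ^ n)"]
  by (auto simp: on_rung_beyond_iff)

lemma rung_function_by_rungs:
  assumes vanish: "\<And>p. \<not> on_rung_beyond N p \<Longrightarrow> F p = 0"
    and rungs: "\<And>n. 1 \<le> n \<Longrightarrow> \<exists>G. rung_function 0 G \<and> (\<forall>a\<in>{0..1}. F (a, 1 / 2 ^ n) = G (a, 1 / 2 ^ n))"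
  shows "rung_function N F"
proof (rule rung_functionI[OF vanish])
  fix n :: nat and a c :: real assume h: "1 \<le> n" "0 \<le> a" "a \<le> 1" "0 \<le> c" "c \<le> 1"
  obtain G where G: "rung_function 0 G" and FG: "\<forall>a\<in>{0..1}. F (a, 1 / 2 ^ n) = G (a, 1 / 2 ^ n)"
    using rungs[OF h(1)] by blast
  have "F (a, 1 / 2 ^ n) = G (a, 1 / 2 ^ n)" "F (c, 1 / 2 ^ n) = G (c, 1 / 2 ^ n)" using FG h by auto
  with G show "\<bar>F (a, 1 / 2 ^ n) - F (c, 1 / 2 ^ n)\<bar> \<le> \<bar>a - c\<bar>"
    using rung_function_rung_lipschitz[OF _ h] by simp
qed

lemma rung_function_split:
  assumes G: "rung_function N G"
  shows "rung_function N' (\<lambda>p. if on_rung_beyond N' p then G p else 0)"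
    and "rung_function N (\<lambda>p. G p - (if on_rung_beyond N' p then G p else 0))"
proof -
  have G0: "rung_function 0 G" using rung_function_mono[OF _ G] by simp
  show "rung_function N' (\<lambda>p. if on_rung_beyond N' p then G p else 0)"
  proof (rule rung_function_by_rungs)
    fix n :: nat
    show "\<exists>G'. rung_function 0 G' \<and> (\<forall>a\<in>{0..1}.
        (if on_rung_beyond N' (a, 1 / 2 ^ n) then G (a, 1 / 2 ^ n) else 0) = G' (a, 1 / 2 ^ n))"
    proof (cases "N' < n")
      case True
      then show ?thesis using G0 rung_function_on_level(1)[OF G] by (intro exI[of _ G]) auto
    next
      case False
      then show ?thesis using rung_function_zero rung_function_on_level(1)[OF G]
        by (intro exI[of _ "\<lambda>_. 0"]) auto
    qed
  qed simp
  show "rung_function N (\<lambda>p. G p - (if on_rung_beyond N' p then G p else 0))"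
  proof (rule rung_function_by_rungs)
    fix n :: nat
    show "\<exists>G'. rung_function 0 G' \<and> (\<forall>a\<in>{0..1}.
        G (a, 1 / 2 ^ n) - (if on_rung_beyond N' (a, 1 / 2 ^ n) then G (a, 1 / 2 ^ n) else 0) = G' (a, 1 / 2 ^ n))"
    proof (cases "N' < n")
      case True
      then show ?thesis using rung_function_zero rung_function_on_level(1)[OF G]
        by (intro exI[of _ "\<lambda>_. 0"]) auto
    next
      case False
      then show ?thesis using G0 rung_function_on_level(1)[OF G] by (intro exI[of _ G]) auto
    qed
  qed (use rung_function_vanishes[OF G] in simp)
qed

lemma rung_function_zero_on_deeper_level:
  assumes "rung_function 0 H" "\<And>p. on_rung_beyond N p \<Longrightarrow> H p = 0" "N < n" "0 \<le> a" "a \<le> 1"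
  shows "H (a, 1 / 2 ^ n) = 0"
  using assms rung_function_vanishes[OF assms(1), of "(a, 1 / 2 ^ n)"]
  by (cases "a = 0 \<or> a = 1") (auto simp: on_rung_beyond_iff)

lemma rung_function_add_deeper:
  assumes H: "rung_function 0 H" "\<And>p. on_rung_beyond N p \<Longrightarrow> H p = 0" and G: "rung_function N G"
  shows "rung_function 0 (\<lambda>p. H p + G p)"
proof (rule rung_function_by_rungs)
  fix n :: nat
  show "\<exists>G'. rung_function 0 G' \<and> (\<forall>a\<in>{0..1}. H (a, 1 / 2 ^ n) + G (a, 1 / 2 ^ n) = G' (a, 1 / 2 ^ n))"
  proof (cases "N < n")
    case True
    then show ?thesis using rung_function_mono[OF _ G, of 0] rung_function_zero_on_deeper_level[OF H]
      by (intro exI[of _ G]) auto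
  next
    case False
    then show ?thesis using H(1) rung_function_on_level(2)[OF G] by (intro exI[of _ H]) auto
  qed
next
  fix p assume "\<not> on_rung_beyond 0 p"
  then show "H p + G p = 0"
    using rung_function_vanishes[OF H(1), of p] rung_function_vanishes[OF G, of p] on_rung_beyond_mono[of 0 N p]
    by auto
qed

lemma free_space_small_on_deep_rungs:
  assumes \<mu>: "\<mu> \<in> ex.Free" and \<eta>: "0 < \<eta>"
  shows "eventually (\<lambda>N. \<forall>G. rung_function N G \<longrightarrow> \<bar>\<mu> G\<bar> \<le> \<eta>) sequentially"
proof -
  obtain S c where S: "finite S" "\<forall>G\<in>ex.Lip0. \<bar>\<mu> G - (\<Sum>x\<in>S. c x * G x)\<bar> \<le> \<eta> * ex.lnorm G"
    using ex.free_space_approx[OF \<mu> \<eta>] by blast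
  have "eventually (\<lambda>N. \<forall>x\<in>S. \<not> on_rung_beyond N x) sequentially"
    using S(1) eventually_not_on_rung_beyond by (simp add: eventually_ball_finite)
  then show ?thesis
  proof (rule eventually_mono, intro allI impI)
    fix N G assume off: "\<forall>x\<in>S. \<not> on_rung_beyond N x" and G: "rung_function N G"
    have "(\<Sum>x\<in>S. c x * G x) = 0" using off rung_function_vanishes[OF G] by simp
    moreover have "\<eta> * ex.lnorm G \<le> \<eta>"
      using rung_function_unit_ball[OF G] \<eta> by (simp add: mult_left_le_one_le ex.lipnorm_nonneg)
    ultimately show "\<bar>\<mu> G\<bar> \<le> \<eta>" using S(2) rung_function_unit_ball(1)[OF G] by force
  qed
qed

section \<open>Perturbations of the norming function of delta q\<close>

definition rung_interp :: "(real \<times> real \<Rightarrow> real) \<Rightarrow> real \<times> real \<Rightarrow> real" where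
  "rung_interp g p = g (0, snd p) + fst p * (g (1, snd p) - g (0, snd p))"

definition flatten :: "nat \<Rightarrow> (real \<times> real \<Rightarrow> real) \<Rightarrow> real \<times> real \<Rightarrow> real" where
  "flatten N g p = (if on_rung_beyond N p then rung_interp g p else g p)"

definition rung_part :: "nat \<Rightarrow> (real \<times> real \<Rightarrow> real) \<Rightarrow> real \<times> real \<Rightarrow> real" where
  "rung_part N g p = (g p - flatten N g p) / 2"

lemma rung_interp_horizontal: "rung_interp g (a, b) - rung_interp g (c, b) = (a - c) * (g (1, b) - g (0, b))"
  by (simp add: rung_interp_def algebra_simps)

lemma unit_ball_side_facts:
  assumes g: "g \<in> ex.Lip0" "ex.lnorm g \<le> 1" and b: "0 \<le> b" "b \<le> 1 / 2"
  shows "\<bar>g (1, 0)\<bar> \<le> 1" "\<bar>g (1, b) - g (0, b)\<bar> \<le> 1"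
    "\<bar>g (1, b) - g (1, 0)\<bar> \<le> b" "\<bar>g (0, b)\<bar> \<le> b"
proof -
  have M: "(0, b) \<in> Mex" "(1, b) \<in> Mex" "(0, 0) \<in> Mex" "(1, 0) \<in> Mex"
    using b by (auto intro: side_in_Mex)
  note lip = ex.unit_ball_lipschitz[OF g]
  show "\<bar>g (1, 0)\<bar> \<le> 1" using lip[OF M(4,3)] ex.lip0_base[OF g(1)] by (simp add: dex_same_level)
  show "\<bar>g (1, b) - g (0, b)\<bar> \<le> 1" using lip[OF M(2,1)] by (simp add: dex_same_level)
  show "\<bar>g (1, b) - g (1, 0)\<bar> \<le> b" using lip[OF M(2,4)] b by (simp add: dex_side)
  show "\<bar>g (0, b)\<bar> \<le> b" using lip[OF M(1,3)] b ex.lip0_base[OF g(1)] by (simp add: dex_side)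
qed

lemma rung_part_rung_function:
  assumes g: "g \<in> ex.Lip0" "ex.lnorm g \<le> 1"
  shows "rung_function N (rung_part N g)"
proof (rule rung_functionI)
  fix p assume "\<not> on_rung_beyond N p"
  then show "rung_part N g p = 0" by (simp add: rung_part_def flatten_def)
next
  fix n :: nat and a c :: real assume n: "1 \<le> n" and ac: "0 \<le> a" "a \<le> 1" "0 \<le> c" "c \<le> 1"
  define b :: real where "b = 1 / 2 ^ n"
  have "b \<le> 1 / 2" unfolding b_def using half_power_le[OF n] .
  then have interp: "\<bar>rung_interp g (a, b) - rung_interp g (c, b)\<bar> \<le> \<bar>a - c\<bar>"
    using unit_ball_side_facts(2)[OF g, of b] unfolding rung_interp_horizontal abs_mult b_def
    by (simp add: mult_left_le)
  have "(a, b) \<in> Mex" "(c, b) \<in> Mex" using n ac unfolding b_def mem_Mex_iff by auto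
  then have lip: "\<bar>g (a, b) - g (c, b)\<bar> \<le> \<bar>a - c\<bar>"
    using ex.unit_ball_lipschitz[OF g] by (metis dex_same_level)
  have part: "rung_part N g (x, b) = (if N < n then (g (x, b) - rung_interp g (x, b)) / 2 else 0)"
    if "0 \<le> x" "x \<le> 1" for x
    using that by (auto simp: rung_part_def flatten_def on_rung_beyond_iff b_def rung_interp_def)
  have "rung_part N g (a, b) - rung_part N g (c, b)
      = (if N < n then ((g (a, b) - g (c, b)) - (rung_interp g (a, b) - rung_interp g (c, b))) / 2 else 0)"
    using part[of a] part[of c] ac by (simp add: diff_divide_distrib)
  then have "\<bar>rung_part N g (a, b) - rung_part N g (c, b)\<bar> \<le> \<bar>a - c\<bar>"
    using lip interp abs_triangle_ineq4[of "g (a, b) - g (c, b)" "rung_interp g (a, b) - rung_interp g (c, b)"]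
    by auto
  then show "\<bar>rung_part N g (a, 1 / 2 ^ n) - rung_part N g (c, 1 / 2 ^ n)\<bar> \<le> \<bar>a - c\<bar>"
    unfolding b_def .
qed

lemma flatten_on_level:
  assumes ab: "(a, b) \<in> Mex" and cb: "(c, b) \<in> Mex"
  obtains "flatten N g (a, b) = rung_interp g (a, b)" "flatten N g (c, b) = rung_interp g (c, b)"
    | "flatten N g (a, b) = g (a, b)" "flatten N g (c, b) = g (c, b)" "1 / 2 ^ N \<le> b"
proof -
  have interp: "flatten N g (x, b) = rung_interp g (x, b)" if "x \<in> {0, 1} \<or> on_rung_beyond N (x, b)" for x
    using that by (auto simp: flatten_def rung_interp_def)
  show ?thesis
  proof (cases "(a \<in> {0, 1} \<and> c \<in> {0, 1}) \<or> (\<exists>n>N. b = 1 / 2 ^ n)")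
    case True
    then have "x \<in> {0, 1} \<or> on_rung_beyond N (x, b)" if "(x, b) \<in> Mex" "x \<in> {a, c}" for x
      using that Mex_bounds[OF that(1)] by (auto simp: on_rung_beyond_def)
    then show ?thesis using that(1) interp ab cb by blast
  next
    case False
    then obtain x n where x: "x \<in> {a, c}" "x \<notin> {0, 1}" and n: "1 \<le> n" "b = 1 / 2 ^ n" "n \<le> N"
      using ab cb unfolding mem_Mex_iff by (metis insert_iff not_le)
    have "\<not> on_rung_beyond N (y, b)" for y using n by (auto simp: on_rung_beyond_def)
    moreover have "(1 / 2 :: real) ^ N \<le> (1 / 2) ^ n" using n(3) by (rule power_decreasing) auto
    ultimately show ?thesis using that(2) n(2) by (simp add: flatten_def power_one_over)
  qed
qed

definition perturbed_norming :: "nat \<Rightarrow> (real \<times> real \<Rightarrow> real) \<Rightarrow> real \<Rightarrow> real \<times> real \<Rightarrow> real" where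
  "perturbed_norming N g \<sigma> p = (1 - \<sigma> * g (1, 0)) * norming_q p + \<sigma> * flatten N g p"

lemma perturbed_norming_norming: "perturbed_norming N g \<sigma> (1, 0) = 1"
  using norming_q_norming by (simp add: perturbed_norming_def flatten_def on_rung_beyond_def algebra_simps)

lemma small_perturbation:
  fixes \<sigma> :: real
  assumes "\<bar>\<sigma>\<bar> \<le> 1 / 2 ^ (N + 2)"
  shows "\<bar>\<sigma>\<bar> * 4 \<le> 1 / 2 ^ N" "\<bar>\<sigma>\<bar> \<le> 1 / 4"
proof -
  show *: "\<bar>\<sigma>\<bar> * 4 \<le> 1 / 2 ^ N" using assms by (simp add: field_simps)
  have "(1 :: real) / 2 ^ N \<le> 1" by simp
  with * show "\<bar>\<sigma>\<bar> \<le> 1 / 4" by linarith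
qed

lemma perturbed_norming_level_diff:
  assumes "(a, b) \<in> Mex" "(c, b) \<in> Mex"
  shows "perturbed_norming N g \<sigma> (a, b) - perturbed_norming N g \<sigma> (c, b)
    = (1 - \<sigma> * g (1, 0)) * (a - c) * (1 - b) + \<sigma> * (flatten N g (a, b) - flatten N g (c, b))"
  using assms by (simp add: perturbed_norming_def norming_q_at algebra_simps)

lemma perturbed_norming_deep_level:
  assumes g: "g \<in> ex.Lip0" "ex.lnorm g \<le> 1" and \<sigma>: "3 * \<bar>\<sigma>\<bar> \<le> 1"
    and ab: "(a, b) \<in> Mex" and cb: "(c, b) \<in> Mex"
    and flat: "flatten N g (a, b) = rung_interp g (a, b)" "flatten N g (c, b) = rung_interp g (c, b)"
  shows "\<bar>perturbed_norming N g \<sigma> (a, b) - perturbed_norming N g \<sigma> (c, b)\<bar> \<le> \<bar>a - c\<bar>"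
proof -
  define \<gamma> where "\<gamma> = g (1, 0)"
  note b = Mex_bounds(3,4)[OF ab] and side = unit_ball_side_facts[OF g Mex_bounds(3,4)[OF ab]]
  define \<kappa> where "\<kappa> = g (1, b) - g (0, b) - \<gamma> * (1 - b)"
  have "\<kappa> = (g (1, b) - g (1, 0)) - g (0, b) + \<gamma> * b" unfolding \<kappa>_def \<gamma>_def by (simp add: algebra_simps)
  moreover have "\<bar>\<gamma> * b\<bar> \<le> b" using side(1) b by (simp add: abs_mult mult_left_le_one_le \<gamma>_def)
  ultimately have "\<bar>\<kappa>\<bar> \<le> 3 * b" using side(3,4) unfolding abs_le_iff by linarith
  then have "\<bar>\<sigma>\<bar> * \<bar>\<kappa>\<bar> \<le> 1 / 3 * (3 * b)" using \<sigma> by (intro mult_mono) auto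
  then have "\<bar>\<sigma> * \<kappa>\<bar> \<le> b" by (simp add: abs_mult)
  then have "\<bar>(1 - b) + \<sigma> * \<kappa>\<bar> \<le> 1" using b unfolding abs_le_iff by linarith
  moreover have "perturbed_norming N g \<sigma> (a, b) - perturbed_norming N g \<sigma> (c, b)
      = (a - c) * ((1 - b) + \<sigma> * \<kappa>)"
    unfolding perturbed_norming_level_diff[OF ab cb] flat rung_interp_horizontal \<kappa>_def \<gamma>_def
    by (simp add: algebra_simps)
  ultimately show ?thesis by (simp add: abs_mult mult_left_le)
qed

lemma perturbed_norming_shallow_level:
  assumes g: "g \<in> ex.Lip0" "ex.lnorm g \<le> 1" and \<sigma>: "2 * \<bar>\<sigma>\<bar> \<le> b"
    and ab: "(a, b) \<in> Mex" and cb: "(c, b) \<in> Mex"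
    and flat: "flatten N g (a, b) = g (a, b)" "flatten N g (c, b) = g (c, b)"
  shows "\<bar>perturbed_norming N g \<sigma> (a, b) - perturbed_norming N g \<sigma> (c, b)\<bar> \<le> \<bar>a - c\<bar>"
proof -
  define \<gamma> where "\<gamma> = g (1, 0)"
  note b = Mex_bounds(3,4)[OF ab]
  have "\<bar>\<sigma> * \<gamma>\<bar> \<le> \<bar>\<sigma>\<bar>"
    using unit_ball_side_facts(1)[OF g b] by (simp add: abs_mult mult_left_le \<gamma>_def)
  then have lead: "\<bar>1 - \<sigma> * \<gamma>\<bar> \<le> 1 + \<bar>\<sigma>\<bar>" unfolding abs_le_iff by linarith
  have "\<bar>(1 - \<sigma> * \<gamma>) * (a - c) * (1 - b)\<bar> = \<bar>1 - \<sigma> * \<gamma>\<bar> * \<bar>a - c\<bar> * (1 - b)"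
    using b by (simp add: abs_mult)
  also have "\<dots> \<le> (1 + \<bar>\<sigma>\<bar>) * \<bar>a - c\<bar> * (1 - b)"
    using lead b by (intro mult_right_mono) auto
  finally have first: "\<bar>(1 - \<sigma> * \<gamma>) * (a - c) * (1 - b)\<bar> \<le> (1 + \<bar>\<sigma>\<bar>) * \<bar>a - c\<bar> * (1 - b)" .
  have second: "\<bar>\<sigma> * (g (a, b) - g (c, b))\<bar> \<le> \<bar>\<sigma>\<bar> * \<bar>a - c\<bar>"
    using ex.unit_ball_lipschitz[OF g ab cb] unfolding abs_mult dex_same_level by (intro mult_left_mono) auto
  have "\<bar>perturbed_norming N g \<sigma> (a, b) - perturbed_norming N g \<sigma> (c, b)\<bar>
      \<le> \<bar>(1 - \<sigma> * \<gamma>) * (a - c) * (1 - b)\<bar> + \<bar>\<sigma> * (g (a, b) - g (c, b))\<bar>"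
    unfolding perturbed_norming_level_diff[OF ab cb] flat \<gamma>_def by (rule abs_triangle_ineq)
  also have "\<dots> \<le> \<bar>a - c\<bar> * ((1 + \<bar>\<sigma>\<bar>) * (1 - b) + \<bar>\<sigma>\<bar>)"
    using add_mono[OF first second] by (simp add: algebra_simps)
  also have "\<dots> \<le> \<bar>a - c\<bar>"
  proof (rule mult_left_le)
    have "(1 + \<bar>\<sigma>\<bar>) * (1 - b) + \<bar>\<sigma>\<bar> = 1 - b + 2 * \<bar>\<sigma>\<bar> - \<bar>\<sigma>\<bar> * b"
      by (simp add: algebra_simps)
    moreover have "0 \<le> \<bar>\<sigma>\<bar> * b" using b by simp
    ultimately show "(1 + \<bar>\<sigma>\<bar>) * (1 - b) + \<bar>\<sigma>\<bar> \<le> 1" using \<sigma> by linarith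
  qed simp
  finally show ?thesis .
qed

lemma perturbed_norming_horizontal:
  assumes g: "g \<in> ex.Lip0" "ex.lnorm g \<le> 1" and \<sigma>: "\<bar>\<sigma>\<bar> \<le> 1 / 2 ^ (N + 2)"
    and ab: "(a, b) \<in> Mex" and cb: "(c, b) \<in> Mex"
  shows "\<bar>perturbed_norming N g \<sigma> (a, b) - perturbed_norming N g \<sigma> (c, b)\<bar> \<le> \<bar>a - c\<bar>"
  using ab cb
proof (cases rule: flatten_on_level[where N = N and g = g])
  case 1
  show ?thesis by (rule perturbed_norming_deep_level[OF g _ ab cb 1]) (use small_perturbation(2)[OF \<sigma>] in simp)
next
  case 2
  show ?thesis by (rule perturbed_norming_shallow_level[OF g _ ab cb 2(1,2)])
    (use small_perturbation(1)[OF \<sigma>] 2(3) in simp)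
qed

lemma perturbed_norming_vertical:
  assumes g: "g \<in> ex.Lip0" "ex.lnorm g \<le> 1" and \<sigma>: "\<bar>\<sigma>\<bar> \<le> 1 / 2 ^ (N + 2)"
    and s: "s \<in> {0, 1}" and b: "0 \<le> b" "b \<le> 1 / 2" and e: "0 \<le> e" "e \<le> 1 / 2"
  shows "\<bar>perturbed_norming N g \<sigma> (s, b) - perturbed_norming N g \<sigma> (s, e)\<bar> \<le> \<bar>b - e\<bar>"
proof -
  define \<gamma> where "\<gamma> = g (1, 0)"
  note \<sigma>14 = small_perturbation(2)[OF \<sigma>]
  have "\<bar>\<sigma> * \<gamma>\<bar> \<le> \<bar>\<sigma>\<bar>"
    using unit_ball_side_facts(1)[OF g b] by (simp add: abs_mult \<gamma>_def mult_left_le)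
  then have lead: "\<bar>1 - \<sigma> * \<gamma>\<bar> \<le> 1 + \<bar>\<sigma>\<bar>" unfolding abs_le_iff by linarith
  have M: "(s, b) \<in> Mex" "(s, e) \<in> Mex" using s b e by (auto intro: side_in_Mex)
  have q_diff: "norming_q (s, b) - norming_q (s, e) = (if s = 0 then b - e else e - b) / 2"
    using s M by (auto simp: norming_q_at field_simps)
  have "\<bar>norming_q (s, b) - norming_q (s, e)\<bar> = \<bar>b - e\<bar> / 2"
    unfolding q_diff by (cases "s = 0") (simp_all add: abs_minus_commute)
  then have first: "\<bar>(1 - \<sigma> * \<gamma>) * (norming_q (s, b) - norming_q (s, e))\<bar> \<le> (1 + \<bar>\<sigma>\<bar>) * (\<bar>b - e\<bar> / 2)"
    unfolding abs_mult using lead by (intro mult_mono) auto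
  have second: "\<bar>\<sigma> * (g (s, b) - g (s, e))\<bar> \<le> \<bar>\<sigma>\<bar> * \<bar>b - e\<bar>"
    using ex.unit_ball_lipschitz[OF g M] unfolding abs_mult dex_side[OF s] by (intro mult_left_mono) auto
  have "flatten N g (s, y) = g (s, y)" for y using s by (auto simp: flatten_def on_rung_beyond_def)
  then have "\<bar>perturbed_norming N g \<sigma> (s, b) - perturbed_norming N g \<sigma> (s, e)\<bar>
      = \<bar>(1 - \<sigma> * \<gamma>) * (norming_q (s, b) - norming_q (s, e)) + \<sigma> * (g (s, b) - g (s, e))\<bar>"
    by (simp add: perturbed_norming_def \<gamma>_def algebra_simps)
  also have "\<dots> \<le> \<bar>(1 - \<sigma> * \<gamma>) * (norming_q (s, b) - norming_q (s, e))\<bar> + \<bar>\<sigma> * (g (s, b) - g (s, e))\<bar>"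
    by (rule abs_triangle_ineq)
  also have "\<dots> \<le> (1 + \<bar>\<sigma>\<bar>) * (\<bar>b - e\<bar> / 2) + \<bar>\<sigma>\<bar> * \<bar>b - e\<bar>"
    by (rule add_mono[OF first second])
  also have "\<dots> = \<bar>b - e\<bar> * ((1 + 3 * \<bar>\<sigma>\<bar>) / 2)"
    by (simp add: field_simps)
  also have "\<dots> \<le> \<bar>b - e\<bar>" using \<sigma>14 by (intro mult_left_le) auto
  finally show ?thesis .
qed

lemma perturbed_norming_unit_ball:
  assumes g: "g \<in> ex.Lip0" "ex.lnorm g \<le> 1" and \<sigma>: "\<bar>\<sigma>\<bar> \<le> 1 / 2 ^ (N + 2)"
  shows "perturbed_norming N g \<sigma> \<in> ex.Lip0 \<and> ex.lnorm (perturbed_norming N g \<sigma>) \<le> 1"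
proof (rule Mex_unit_ballI)
  have "\<not> on_rung_beyond N p" if "p \<notin> Mex" for p using that on_rung_beyond_in_Mex by blast
  then show "perturbed_norming N g \<sigma> p = 0" if "p \<notin> Mex" for p
    using that ex.lip0_outside[OF g(1)] by (simp add: perturbed_norming_def norming_q_def flatten_def)
  show "perturbed_norming N g \<sigma> (0, 0) = 0"
    using ex.lip0_base[OF g(1)] norming_q_at[OF side_in_Mex[of 0 0]]
    by (simp add: perturbed_norming_def flatten_def on_rung_beyond_def)
next
  fix a b c assume "(a, b) \<in> Mex" "(c, b) \<in> Mex"
  then show "\<bar>perturbed_norming N g \<sigma> (a, b) - perturbed_norming N g \<sigma> (c, b)\<bar> \<le> \<bar>a - c\<bar>"
    by (rule perturbed_norming_horizontal[OF g \<sigma>])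
next
  fix s b e :: real assume "s \<in> {0, 1}" "0 \<le> b" "b \<le> 1 / 2" "0 \<le> e" "e \<le> 1 / 2"
  then show "\<bar>perturbed_norming N g \<sigma> (s, b) - perturbed_norming N g \<sigma> (s, e)\<bar> \<le> \<bar>b - e\<bar>"
    by (rule perturbed_norming_vertical[OF g \<sigma>])
qed

lemma flatten_eq: "flatten N g = (\<lambda>p. 1 * g p + (-2) * rung_part N g p)"
  by (rule ext) (simp add: rung_part_def field_simps)

lemma free_space_perturbed_norming:
  assumes \<mu>: "\<mu> \<in> ex.Free" and g: "g \<in> ex.Lip0" "ex.lnorm g \<le> 1"
  shows "\<mu> (flatten N g) = \<mu> g - 2 * \<mu> (rung_part N g)"
    and "\<mu> (perturbed_norming N g \<sigma>) = (1 - \<sigma> * g (1, 0)) * \<mu> norming_q + \<sigma> * \<mu> (flatten N g)"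
proof -
  note R = rung_function_unit_ball(1)[OF rung_part_rung_function[OF g]]
  show "\<mu> (flatten N g) = \<mu> g - 2 * \<mu> (rung_part N g)"
    unfolding flatten_eq using ex.free_space_linear[OF \<mu> g(1) R, of 1 "-2"] by simp
  have "flatten N g \<in> ex.Lip0" unfolding flatten_eq by (rule ex.lip0_lincomb[OF g(1) R])
  then show "\<mu> (perturbed_norming N g \<sigma>) = (1 - \<sigma> * g (1, 0)) * \<mu> norming_q + \<sigma> * \<mu> (flatten N g)"
    using ex.free_space_linear[OF \<mu> conjunct1[OF norming_q_unit_ball]]
    unfolding perturbed_norming_def[abs_def] by simp
qed

lemma small_on_norming_functions_of_delta_q:
  assumes \<mu>: "\<mu> \<in> ex.Free"
    and plus: "ex.fnorm (\<lambda>f. ex.delta (1, 0) f + \<mu> f) \<le> 1 + \<eta>"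
    and minus: "ex.fnorm (\<lambda>f. ex.delta (1, 0) f - \<mu> f) \<le> 1 + \<eta>"
    and f: "f \<in> ex.Lip0 \<and> ex.lnorm f \<le> 1" and norming: "f (1, 0) = 1"
  shows "\<bar>\<mu> f\<bar> \<le> \<eta>"
proof -
  have \<delta>: "ex.delta (1, 0) \<in> ex.Free" by (rule ex.delta_in_free_space) (rule side_in_Mex, auto)
  have "ex.delta (1, 0) f = 1" using f norming by (simp add: ex.delta_def)
  with f show ?thesis
    using ex.small_on_norming_functions[OF ex.free_space_dual_bounded[OF \<delta>]
        ex.free_space_dual_bounded[OF \<mu>] plus minus] by blast
qed

lemma rung_witness:
  assumes \<mu>: "\<mu> \<in> ex.Free"
    and plus: "ex.fnorm (\<lambda>f. ex.delta (1, 0) f + \<mu> f) \<le> 1 + \<eta>"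
    and minus: "ex.fnorm (\<lambda>f. ex.delta (1, 0) f - \<mu> f) \<le> 1 + \<eta>"
    and large: "1 - \<eta> < ex.fnorm \<mu>" and \<eta>: "\<eta> \<le> 1 / 2 ^ (N + 2) / 16"
  shows "\<exists>G. rung_function N G \<and> 1 / 4 \<le> \<mu> G"
proof -
  define s :: real where "s = 1 / 2 ^ (N + 2)"
  have s: "0 < s" "s \<le> 1 / 4" using small_perturbation(2)[of s N] by (simp_all add: s_def)
  obtain g where g: "g \<in> ex.Lip0" "ex.lnorm g \<le> 1" and \<mu>g: "1 - \<eta> < \<mu> g"
    using ex.free_space_norming[OF \<mu> large] by blast
  define \<gamma> where "\<gamma> = g (1, 0)"
  have \<gamma>: "\<bar>\<gamma>\<bar> \<le> 1" unfolding \<gamma>_def using unit_ball_side_facts(1)[OF g, of 0] by simp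
  note small = small_on_norming_functions_of_delta_q[OF \<mu> plus minus]
  note \<mu>_flat = free_space_perturbed_norming(1)[OF \<mu> g, of N]
    and \<mu>_P = free_space_perturbed_norming(2)[OF \<mu> g, folded \<gamma>_def]
  text \<open>Both perturbations by \<open>\<plusminus>s\<close> norm delta q, so \<mu> almost vanishes on them; their
    difference isolates \<mu> (flatten N g).\<close>
  have "\<bar>\<mu> (perturbed_norming N g \<sigma>)\<bar> \<le> \<eta>" if "\<bar>\<sigma>\<bar> = s" for \<sigma>
    using small[OF perturbed_norming_unit_ball[OF g] perturbed_norming_norming] that s_def by simp
  from this[of s] this[of "- s"] have "\<bar>2 * s * (\<mu> (flatten N g) - \<gamma> * \<mu> norming_q)\<bar> \<le> 2 * \<eta>"
    using s unfolding \<mu>_P by (simp add: abs_le_iff algebra_simps)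
  then have "s * \<bar>\<mu> (flatten N g) - \<gamma> * \<mu> norming_q\<bar> \<le> \<eta>"
    using s by (simp add: abs_mult)
  also have "\<eta> \<le> s * (1 / 16)" using \<eta> unfolding s_def by simp
  finally have flat_small: "\<bar>\<mu> (flatten N g) - \<gamma> * \<mu> norming_q\<bar> \<le> 1 / 16"
    using s(1) by (simp add: mult_le_cancel_left_pos)
  have "\<bar>\<gamma> * \<mu> norming_q\<bar> \<le> \<eta>"
    using mult_mono[OF \<gamma> small[OF norming_q_unit_ball norming_q_norming]] by (simp add: abs_mult)
  then have "1 / 2 \<le> 2 * \<mu> (rung_part N g)"
    using \<mu>g \<mu>_flat flat_small \<eta> s unfolding abs_le_iff s_def[symmetric] by linarith
  then show ?thesis using rung_part_rung_function[OF g, of N] by (intro exI[of _ "rung_part N g"]) simp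
qed

lemma eventually_rung_witness:
  assumes y: "\<And>i. y i \<in> ex.Free"
    and plus: "(\<lambda>i. ex.fnorm (\<lambda>f. ex.delta (1, 0) f + y i f)) \<longlonglongrightarrow> 1"
    and minus: "(\<lambda>i. ex.fnorm (\<lambda>f. ex.delta (1, 0) f - y i f)) \<longlonglongrightarrow> 1"
    and norm: "(\<lambda>i. ex.fnorm (y i)) \<longlonglongrightarrow> 1"
  shows "eventually (\<lambda>i. \<exists>G. rung_function N G \<and> 1 / 4 \<le> y i G) sequentially"
proof -
  define \<eta> :: real where "\<eta> = 1 / 2 ^ (N + 2) / 16"
  have \<eta>: "0 < \<eta>" unfolding \<eta>_def by simp
  have "eventually (\<lambda>i. ex.fnorm (\<lambda>f. ex.delta (1, 0) f + y i f) < 1 + \<eta>) sequentially"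
    by (rule order_tendstoD(2)[OF plus]) (use \<eta> in simp)
  moreover have "eventually (\<lambda>i. ex.fnorm (\<lambda>f. ex.delta (1, 0) f - y i f) < 1 + \<eta>) sequentially"
    by (rule order_tendstoD(2)[OF minus]) (use \<eta> in simp)
  moreover have "eventually (\<lambda>i. 1 - \<eta> < ex.fnorm (y i)) sequentially"
    by (rule order_tendstoD(1)[OF norm]) (use \<eta> in simp)
  ultimately show ?thesis
  proof eventually_elim
    case (elim i)
    then show ?case by (intro rung_witness[OF y]) (auto simp: \<eta>_def)
  qed
qed

section \<open>The sliding hump\<close>

lemma free_space_truncate_rungs:
  assumes \<mu>: "\<mu> \<in> ex.Free" and G: "rung_function N G"
    and tail: "\<And>G'. rung_function N' G' \<Longrightarrow> \<bar>\<mu> G'\<bar> \<le> \<epsilon>"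
  shows "\<exists>L. rung_function N L \<and> (\<forall>p. on_rung_beyond N' p \<longrightarrow> L p = 0) \<and> \<mu> G - \<epsilon> \<le> \<mu> L"
proof -
  define high where "high p = (if on_rung_beyond N' p then G p else 0)" for p
  define low where "low p = G p - high p" for p
  have high: "rung_function N' high" and low: "rung_function N low"
    unfolding high_def low_def using rung_function_split[OF G] by auto
  have "\<mu> G = \<mu> low + \<mu> high"
    using ex.free_space_linear[OF \<mu> rung_function_unit_ball(1)[OF low] rung_function_unit_ball(1)[OF high], of 1 1]
    by (simp add: low_def)
  moreover have "\<forall>p. on_rung_beyond N' p \<longrightarrow> low p = 0" by (simp add: low_def high_def)
  ultimately show ?thesis using low tail[OF high] by (intro exI[of _ low]) auto
qed

lemma rung_sequence_stationary:
  fixes N :: "nat \<Rightarrow> nat" and H :: "nat \<Rightarrow> real \<times> real \<Rightarrow> real"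
  assumes N: "strict_mono N" and agree: "\<And>k p. \<not> on_rung_beyond (N k) p \<Longrightarrow> H (Suc k) p = H k p"
    and "k \<le> m" "\<not> on_rung_beyond (N k) p"
  shows "H m p = H k p"
  using \<open>k \<le> m\<close>
proof (induction m rule: dec_induct)
  case (step m)
  then have "\<not> on_rung_beyond (N m) p"
    using assms(4) on_rung_beyond_mono strict_mono_less_eq[OF N] by blast
  then show ?case using agree step(3) by simp
qed simp

lemma rung_function_limit:
  fixes N :: "nat \<Rightarrow> nat" and H :: "nat \<Rightarrow> real \<times> real \<Rightarrow> real"
  assumes N: "strict_mono N"
    and H: "\<And>k. rung_function 0 (H k)" "\<And>k p. on_rung_beyond (N k) p \<Longrightarrow> H k p = 0"
    and agree: "\<And>k p. \<not> on_rung_beyond (N k) p \<Longrightarrow> H (Suc k) p = H k p"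
  obtains F where "rung_function 0 F" "\<And>k. rung_function (N k) (\<lambda>p. F p - H k p)"
proof -
  note stationary = rung_sequence_stationary[of N H, OF N agree]
  define F where "F p = lim (\<lambda>m. H m p)" for p
  have F: "F p = H k p" if "\<not> on_rung_beyond (N k) p" for k p
  proof -
    have "eventually (\<lambda>m. H m p = H k p) sequentially"
      using eventually_ge_at_top[of k] by eventually_elim (use stationary that in blast)
    then show ?thesis unfolding F_def by (rule limI[OF tendsto_eventually])
  qed
  have own_rung: "\<not> on_rung_beyond (N n) (a, 1 / 2 ^ n)" for n a
    using seq_suble[OF N, of n] by (simp add: on_rung_beyond_iff)
  show thesis
  proof
    show "rung_function 0 F"
    proof (rule rung_function_by_rungs)
      fix p assume "\<not> on_rung_beyond 0 p"
      then show "F p = 0"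
        using F[of 0 p] on_rung_beyond_mono[of 0 "N 0" p] rung_function_vanishes[OF H(1)] by auto
    next
      fix n :: nat
      show "\<exists>G. rung_function 0 G \<and> (\<forall>a\<in>{0..1}. F (a, 1 / 2 ^ n) = G (a, 1 / 2 ^ n))"
        using H(1)[of n] F[OF own_rung] by blast
    qed
    fix k
    show "rung_function (N k) (\<lambda>p. F p - H k p)"
    proof (rule rung_function_by_rungs)
      fix n :: nat
      show "\<exists>G. rung_function 0 G \<and> (\<forall>a\<in>{0..1}. F (a, 1 / 2 ^ n) - H k (a, 1 / 2 ^ n) = G (a, 1 / 2 ^ n))"
      proof (cases "N k < n")
        case True
        then show ?thesis using H(1)[of n] F[OF own_rung] rung_function_zero_on_deeper_level[OF H(1,2)]
          by (intro exI[of _ "H n"]) auto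
      next
        case False
        then show ?thesis using rung_function_zero F[of k] by (intro exI[of _ "\<lambda>_. 0"]) (auto simp: on_rung_beyond_iff)
      qed
    qed (use F in simp)
  qed
qed

context
  fixes y :: "nat \<Rightarrow> (real \<times> real \<Rightarrow> real) \<Rightarrow> real"
  assumes y: "\<And>i. y i \<in> ex.Free"
    and witness: "\<And>N. eventually (\<lambda>i. \<exists>G. rung_function N G \<and> 1 / 4 \<le> y i G) sequentially"
    and null: "\<And>G. G \<in> ex.Lip0 \<Longrightarrow> ex.lnorm G \<le> 1 \<Longrightarrow> (\<lambda>i. y i G) \<longlonglongrightarrow> 0"
begin

lemma hump_step:
  assumes H: "rung_function 0 H" "\<And>p. on_rung_beyond N p \<Longrightarrow> H p = 0"
  shows "\<exists>N' H'. rung_function 0 H' \<and> (\<forall>p. on_rung_beyond N' p \<longrightarrow> H' p = 0) \<and> N < N' \<and>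
    (\<forall>p. \<not> on_rung_beyond N p \<longrightarrow> H' p = H p) \<and>
    (\<exists>i\<ge>k. 3 / 16 \<le> y i H' \<and> (\<forall>G. rung_function N' G \<longrightarrow> \<bar>y i G\<bar> \<le> 1 / 32))"
proof -
  note H_ball = rung_function_unit_ball[OF H(1)]
  have "eventually (\<lambda>i. \<bar>y i H\<bar> < 1 / 32) sequentially"
    by (rule order_tendstoD(2)[OF tendsto_rabs_zero[OF null[OF H_ball]]]) simp
  then have "eventually (\<lambda>i. \<bar>y i H\<bar> < 1 / 32 \<and> (\<exists>G. rung_function N G \<and> 1 / 4 \<le> y i G) \<and> k \<le> i)
      sequentially"
    using witness[of N] eventually_ge_at_top[of k] by eventually_elim blast
  then obtain i G where i: "\<bar>y i H\<bar> < 1 / 32" "k \<le> i" and G: "rung_function N G" "1 / 4 \<le> y i G"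
    using eventually_happens'[OF sequentially_bot] by blast
  have "eventually (\<lambda>N'. (\<forall>G. rung_function N' G \<longrightarrow> \<bar>y i G\<bar> \<le> 1 / 32) \<and> N < N') sequentially"
    using free_space_small_on_deep_rungs[OF y[of i], of "1 / 32"] eventually_gt_at_top[of N]
    by (simp add: eventually_conj_iff)
  then obtain N' where tail: "\<And>G. rung_function N' G \<Longrightarrow> \<bar>y i G\<bar> \<le> 1 / 32" and "N < N'"
    using eventually_happens'[OF sequentially_bot] by blast
  obtain L where L: "rung_function N L" "\<forall>p. on_rung_beyond N' p \<longrightarrow> L p = 0" "7 / 32 \<le> y i L"
    using free_space_truncate_rungs[OF y G(1) tail] G(2) by force
  define H' where "H' = (\<lambda>p. H p + L p)"
  have "rung_function 0 H'" unfolding H'_def by (rule rung_function_add_deeper[OF H L(1)])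
  moreover have "\<forall>p. on_rung_beyond N' p \<longrightarrow> H' p = 0"
    using H(2) on_rung_beyond_mono[of N N'] \<open>N < N'\<close> L(2) by (simp add: H'_def)
  moreover have "\<forall>p. \<not> on_rung_beyond N p \<longrightarrow> H' p = H p"
    using rung_function_vanishes[OF L(1)] by (simp add: H'_def)
  moreover have "y i H' = y i H + y i L"
    using ex.free_space_linear[OF y H_ball(1) rung_function_unit_ball(1)[OF L(1)], of i 1 1]
    by (simp add: H'_def)
  then have "3 / 16 \<le> y i H'" using i(1) L(3) by simp
  ultimately show ?thesis using \<open>N < N'\<close> i(2) tail by blast
qed

lemma hump_sequence:
  obtains N :: "nat \<Rightarrow> nat" and H :: "nat \<Rightarrow> real \<times> real \<Rightarrow> real"
  where "strict_mono N" "\<And>k. rung_function 0 (H k)" "\<And>k p. on_rung_beyond (N k) p \<Longrightarrow> H k p = 0"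
    "\<And>k p. \<not> on_rung_beyond (N k) p \<Longrightarrow> H (Suc k) p = H k p"
    "\<And>k. \<exists>i\<ge>k. 3 / 16 \<le> y i (H (Suc k)) \<and> (\<forall>G. rung_function (N (Suc k)) G \<longrightarrow> \<bar>y i G\<bar> \<le> 1 / 32)"
proof -
  define P :: "nat \<Rightarrow> nat \<times> (real \<times> real \<Rightarrow> real) \<Rightarrow> bool" where
    "P = (\<lambda>_ (N, H). rung_function 0 H \<and> (\<forall>p. on_rung_beyond N p \<longrightarrow> H p = 0))"
  define Q :: "nat \<Rightarrow> nat \<times> (real \<times> real \<Rightarrow> real) \<Rightarrow> nat \<times> (real \<times> real \<Rightarrow> real) \<Rightarrow> bool" where
    "Q = (\<lambda>k (N, H) (N', H'). N < N' \<and> (\<forall>p. \<not> on_rung_beyond N p \<longrightarrow> H' p = H p) \<and>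
       (\<exists>i\<ge>k. 3 / 16 \<le> y i H' \<and> (\<forall>G. rung_function N' G \<longrightarrow> \<bar>y i G\<bar> \<le> 1 / 32)))"
  have "\<exists>f. \<forall>k. P k (f k) \<and> Q k (f k) (f (Suc k))"
  proof (rule dependent_nat_choice)
    show "\<exists>x. P 0 x" by (intro exI[of _ "(0, \<lambda>_. 0)"]) (simp add: P_def rung_function_zero)
  next
    fix x k assume "P k x"
    obtain N H where x: "x = (N, H)" by fastforce
    with \<open>P k x\<close> have H: "rung_function 0 H" "\<And>p. on_rung_beyond N p \<Longrightarrow> H p = 0"
      by (simp_all add: P_def del: split_paired_All)
    have "\<exists>N' H'. rung_function 0 H' \<and> (\<forall>p. on_rung_beyond N' p \<longrightarrow> H' p = 0) \<and> N < N' \<and>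
        (\<forall>p. \<not> on_rung_beyond N p \<longrightarrow> H' p = H p) \<and>
        (\<exists>i\<ge>k. 3 / 16 \<le> y i H' \<and> (\<forall>G. rung_function N' G \<longrightarrow> \<bar>y i G\<bar> \<le> 1 / 32))"
      by (rule hump_step) (fact H)+
    then show "\<exists>x'. P (Suc k) x' \<and> Q k x x'" unfolding P_def Q_def x by auto
  qed
  then obtain f where f: "\<And>k. P k (f k) \<and> Q k (f k) (f (Suc k))" by blast
  define N where "N k = fst (f k)" for k
  define H where "H k = snd (f k)" for k
  have "P k (N k, H k) \<and> Q k (N k, H k) (N (Suc k), H (Suc k))" for k
    using f[of k] by (simp add: N_def H_def)
  then have "\<And>k. N k < N (Suc k)" "\<And>k. rung_function 0 (H k)" "\<And>k p. on_rung_beyond (N k) p \<Longrightarrow> H k p = 0"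
    "\<And>k p. \<not> on_rung_beyond (N k) p \<Longrightarrow> H (Suc k) p = H k p"
    "\<And>k. \<exists>i\<ge>k. 3 / 16 \<le> y i (H (Suc k)) \<and> (\<forall>G. rung_function (N (Suc k)) G \<longrightarrow> \<bar>y i G\<bar> \<le> 1 / 32)"
    unfolding P_def Q_def by (simp_all del: split_paired_All)
  then show thesis using that[of N H] by (simp add: strict_mono_Suc_iff)
qed

text \<open>The pieces found for the y i lie on disjoint blocks of rungs and glue to a single 1-Lipschitz
  function F; along the chosen subsequence, y i sees F only through its own piece, up to errors
  of 1/32.\<close>

lemma sliding_hump: False
proof -
  obtain N H where "strict_mono N" and H: "\<And>k. rung_function 0 (H k)"
    "\<And>k p. on_rung_beyond (N k) p \<Longrightarrow> H k p = 0"
    and agree: "\<And>k p. \<not> on_rung_beyond (N k) p \<Longrightarrow> H (Suc k) p = H k p"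
    and hump: "\<And>k. \<exists>i\<ge>k. 3 / 16 \<le> y i (H (Suc k)) \<and> (\<forall>G. rung_function (N (Suc k)) G \<longrightarrow> \<bar>y i G\<bar> \<le> 1 / 32)"
    by (rule hump_sequence) blast
  from \<open>strict_mono N\<close> obtain F where F: "rung_function 0 F"
    and tails: "\<And>k. rung_function (N k) (\<lambda>p. F p - H k p)"
    by (rule rung_function_limit[of N H]) (use H agree in auto)
  have "eventually (\<lambda>i. \<bar>y i F\<bar> < 5 / 32) sequentially"
    by (rule order_tendstoD(2)[OF tendsto_rabs_zero[OF null[OF rung_function_unit_ball[OF F]]]]) simp
  then obtain I where I: "\<And>i. I \<le> i \<Longrightarrow> \<bar>y i F\<bar> < 5 / 32"
    unfolding eventually_sequentially by blast
  obtain i where "I \<le> i" and large: "3 / 16 \<le> y i (H (Suc I))"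
    and deep: "\<forall>G. rung_function (N (Suc I)) G \<longrightarrow> \<bar>y i G\<bar> \<le> 1 / 32"
    using hump[of I] by blast
  have small: "\<bar>y i (\<lambda>p. F p - H (Suc I) p)\<bar> \<le> 1 / 32" using deep tails by simp
  have "y i F = y i (\<lambda>p. 1 * H (Suc I) p + 1 * (F p - H (Suc I) p))" by simp
  also have "\<dots> = y i (H (Suc I)) + y i (\<lambda>p. F p - H (Suc I) p)"
    using ex.free_space_linear[OF y rung_function_unit_ball(1)[OF H(1)[of "Suc I"]]
        rung_function_unit_ball(1)[OF tails[of "Suc I"]], of i 1 1]
    by simp
  finally show False using I[OF \<open>I \<le> i\<close>] large small by (simp add: abs_le_iff)
qed

end

theorem mainTheorem1:
  shows "\<not> free_WASQ Mex dex (0, 0)"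
proof
  assume WASQ: "free_WASQ Mex dex (0, 0)"
  have "ex.delta (1, 0) \<in> ex.Free" by (rule ex.delta_in_free_space) (rule side_in_Mex, auto)
  then obtain y where y: "\<forall>i. y i \<in> ex.Free \<and> ex.fnorm (y i) \<le> 1"
    and plus: "(\<lambda>i. ex.fnorm (\<lambda>f. ex.delta (1, 0) f + y i f)) \<longlonglongrightarrow> 1"
    and minus: "(\<lambda>i. ex.fnorm (\<lambda>f. ex.delta (1, 0) f - y i f)) \<longlonglongrightarrow> 1"
    and norm: "(\<lambda>i. ex.fnorm (y i)) \<longlonglongrightarrow> 1" and weak: "weakly_null Mex dex (0, 0) y"
    using WASQ[unfolded free_WASQ_def, rule_format, OF _ dnorm_delta_q] by blast
  from y have y: "\<And>i. y i \<in> ex.Free" by blast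
  show False
    by (rule sliding_hump[OF y eventually_rung_witness[OF y plus minus norm] ex.weakly_null_unit_ball[OF weak]])
qed

end
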